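(* Let $1\le k\le n-1$, let $I,J\in V_{k,n}$, and let $P_1,\dots,P_d$ be the connected components of $F_I\triangle F_J$, ordered by increasing column index. Let $\alpha_I,\alpha_J\in\{0,1\}^d$ be defined by $(\alpha_I)_m=1$ iff $P_m\subseteq F_I$ (and similarly for $J$), so that $\chi_I=\chi_{F_I\cap F_J}+\sum_m(\alpha_I)_m\chi_{P_m}$ and likewise for $J$. Then: (1) $I$ and $J$ are nonnesting if and only if $\{\alpha_I,\alpha_J\}=\{(0,\dots,0),(1,\dots,1)\}$; (2) $I$ and $J$ are noncrossing if and only if $\{\alpha_I,\alpha_J\}=\{(0,1,0,1,\dots),(1,0,1,0,\dots)\}$ (the two alternating vectors of length $d$).
   Context: $V_{k,n}$ denotes the set of integer vectors $I=(i_1,\dots,i_k)$ with $1\le i_1<\dots<i_k\le n$. Two arcs $(p<p')$, $(q<q')$ cross if $p<q<p'<q'$ or $q<p<q'<p'$; they nest if $p<q<q'<p'$ or $q<p<p'<q'$. $I,J$ are noncrossing if for all $1\le a<b\le k$ with $i_\ell=j_\ell$ for all $a<\ell<b$, the arcs $(i_a<i_b)$ and $(j_a<j_b)$ do not cross; they are nonnesting if for all $1\le a<b\le k$ these arcs do not nest. Let $P_{k,n}=\{(a,b):a\in[k],b\in[n-k]\}$ ($a$ = row, $b$ = column index), and for $I\in V_{k,n}$ let $F_I=\{(a,b)\in P_{k,n}: i_a\le a+b-1\}$ with characteristic vector $\chi_I$. The connected components of $S=F_I\triangle F_J$ are taken with respect to adjacency of positions differing by $1$ in exactly one coordinate; they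 occupy pairwise disjoint intervals of column indices, and are labeled $P_1,\dots,P_d$ from left (smallest column indices) to right. *)

theory Defs
  imports Main
begin

text \<open>Vectors I = (i_1,...,i_k) are functions on the index set {1..k}.\<close>

definition inV :: "nat \<Rightarrow> nat \<Rightarrow> (nat \<Rightarrow> nat) \<Rightarrow> bool" where
  "inV k n I \<longleftrightarrow> strict_mono_on {1..k} I \<and> I ` {1..k} \<subseteq> {1..n}"

definition arcs_cross :: "nat \<Rightarrow> nat \<Rightarrow> nat \<Rightarrow> nat \<Rightarrow> bool" where
  "arcs_cross p p' q q' \<longleftrightarrow> (p < q \<and> q < p' \<and> p' < q') \<or> (q < p \<and> p < q' \<and> q' < p')"

definition arcs_nest :: "nat \<Rightarrow> nat \<Rightarrow> nat \<Rightarrow> nat \<Rightarrow> bool" where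
  "arcs_nest p p' q q' \<longleftrightarrow> (p < q \<and> q < q' \<and> q' < p') \<or> (q < p \<and> p < p' \<and> p' < q')"

definition noncrossing :: "nat \<Rightarrow> (nat \<Rightarrow> nat) \<Rightarrow> (nat \<Rightarrow> nat) \<Rightarrow> bool" where
  "noncrossing k I J \<longleftrightarrow>
     (\<forall>a b. 1 \<le> a \<longrightarrow> a < b \<longrightarrow> b \<le> k \<longrightarrow> (\<forall>l. a < l \<longrightarrow> l < b \<longrightarrow> I l = J l) \<longrightarrow>
        \<not> arcs_cross (I a) (I b) (J a) (J b))"

definition nonnesting :: "nat \<Rightarrow> (nat \<Rightarrow> nat) \<Rightarrow> (nat \<Rightarrow> nat) \<Rightarrow> bool" where
  "nonnesting k I J \<longleftrightarrow>
     (\<forall>a b. 1 \<le> a \<longrightarrow> a < b \<longrightarrow> b \<le> k \<longrightarrow> \<not> arcs_nest (I a) (I b) (J a) (J b))"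

text \<open>P_{k,n}: positions (a,b), a = row in [k], b = column in [n-k].\<close>
definition Pkn :: "nat \<Rightarrow> nat \<Rightarrow> (nat \<times> nat) set" where
  "Pkn k n = {1..k} \<times> {1..n - k}"

definition F :: "nat \<Rightarrow> nat \<Rightarrow> (nat \<Rightarrow> nat) \<Rightarrow> (nat \<times> nat) set" where
  "F k n I = {(a, b) \<in> Pkn k n. I a \<le> a + b - 1}"

definition adjacent :: "nat \<times> nat \<Rightarrow> nat \<times> nat \<Rightarrow> bool" where
  "adjacent x y \<longleftrightarrow>
     (fst x = fst y \<and> (snd x = snd y + 1 \<or> snd y = snd x + 1)) \<or>
     (snd x = snd y \<and> (fst x = fst y + 1 \<or> fst y = fst x + 1))"

definition component :: "(nat \<times> nat) set \<Rightarrow> nat \<times> nat \<Rightarrow> (nat \<times> nat) set" where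
  "component S x = {y \<in> S. (\<lambda>u v. u \<in> S \<and> v \<in> S \<and> adjacent u v)\<^sup>*\<^sup>* x y}"

definition components :: "(nat \<times> nat) set \<Rightarrow> (nat \<times> nat) set set" where
  "components S = component S ` S"

definition comp_list :: "nat \<Rightarrow> nat \<Rightarrow> (nat \<Rightarrow> nat) \<Rightarrow> (nat \<Rightarrow> nat) \<Rightarrow> (nat \<times> nat) set list" where
  "comp_list k n I J =
     sorted_key_list_of_set (\<lambda>P. Min (snd ` P)) (components (F k n I - F k n J \<union> (F k n J - F k n I)))"

definition alpha :: "nat \<Rightarrow> nat \<Rightarrow> (nat \<Rightarrow> nat) \<Rightarrow> (nat \<Rightarrow> nat) \<Rightarrow> (nat \<Rightarrow> nat) \<Rightarrow> nat list" where
  "alpha k n X I J = map (\<lambda>P. if P \<subseteq> F k n X then 1 else 0) (comp_list k n I J)"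

definition alt01 :: "nat \<Rightarrow> nat list" where
  "alt01 d = map (\<lambda>i. i mod 2) [0..<d]"

definition alt10 :: "nat \<Rightarrow> nat list" where
  "alt10 d = map (\<lambda>i. 1 - i mod 2) [0..<d]"

end

theory Submission
  imports Defs
begin

text \<open>
  Row a of S = F_I \<triangle> F_J is the interval of columns between I a + 1 - a and J a + 1 - a: it is
  empty iff I a = J a and lies in F_I iff I a < J a. Since F_I and F_J are closed under moving up a
  row, vertically adjacent cells of S lie on the same side, and two consecutive nonempty rows are
  joined unless the lower one starts no earlier than the upper one ends (a cut). Hence the
  components of S are blocks of consecutive nonempty rows separated by cuts, each contained in F_I
  or in F_J, and their left-to-right order is their top-to-bottom order.

  The arcs (I a, I b) and (J a, J b) nest iff rows a and b are nonempty and lie on opposite sides,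
  which gives (1). If all rows strictly between a and b are empty, the arcs cross iff a is the last
  row of a component, b the first row of the next one, and both lie on the same side, which
  gives (2).
\<close>

section \<open>Pairs of complementary 0/1 vectors\<close>

lemma map_of_bool_eq_replicate_iff:
  "map (\<lambda>x. of_bool (p x)) xs = replicate (length xs) (c :: nat) \<longleftrightarrow> (\<forall>x\<in>set xs. of_bool (p x) = c)"
  by (induction xs) auto

lemma indicator_pair_eq_constants_iff:
  "{map (\<lambda>x. of_bool (p x)) xs, map (\<lambda>x. of_bool (\<not> p x)) xs}
     = {replicate (length xs) 0, replicate (length xs) (1 :: nat)}
   \<longleftrightarrow> (\<forall>x\<in>set xs. \<forall>y\<in>set xs. p x = p y)"
  unfolding doubleton_eq_iff map_of_bool_eq_replicate_iff[of p] map_of_bool_eq_replicate_iff[of "\<lambda>x. \<not> p x"]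
  by auto

lemma alternating_iff_parity:
  "(\<forall>i. Suc i < length xs \<longrightarrow> p (xs ! i) \<noteq> p (xs ! Suc i))
   \<longleftrightarrow> (\<forall>i<length xs. p (xs ! i) \<longleftrightarrow> (p (xs ! 0) \<longleftrightarrow> even i))"
proof
  assume alt: "\<forall>i. Suc i < length xs \<longrightarrow> p (xs ! i) \<noteq> p (xs ! Suc i)"
  show "\<forall>i<length xs. p (xs ! i) \<longleftrightarrow> (p (xs ! 0) \<longleftrightarrow> even i)"
  proof (intro allI impI)
    fix i assume "i < length xs"
    then show "p (xs ! i) \<longleftrightarrow> (p (xs ! 0) \<longleftrightarrow> even i)"
      using alt by (induction i) auto
  qed
qed (metis Suc_lessD even_Suc)

lemma of_bool_eq_alt_iff:
  "map (\<lambda>x. of_bool (p x)) xs = alt01 (length xs) \<longleftrightarrow> (\<forall>i<length xs. p (xs ! i) \<longleftrightarrow> odd i)"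
  "map (\<lambda>x. of_bool (p x)) xs = alt10 (length xs) \<longleftrightarrow> (\<forall>i<length xs. p (xs ! i) \<longleftrightarrow> even i)"
  unfolding alt01_def alt10_def list_eq_iff_nth_eq by (simp_all add: of_bool_def mod2_eq_if) blast+

lemma indicator_pair_eq_alternating_iff:
  "{map (\<lambda>x. of_bool (p x)) xs, map (\<lambda>x. of_bool (\<not> p x)) xs}
     = {alt01 (length xs), alt10 (length xs)}
   \<longleftrightarrow> (\<forall>i. Suc i < length xs \<longrightarrow> p (xs ! i) \<noteq> p (xs ! Suc i))"
proof -
  have "{map (\<lambda>x. of_bool (p x)) xs, map (\<lambda>x. of_bool (\<not> p x)) xs}
          = {alt01 (length xs), alt10 (length xs)}
        \<longleftrightarrow> (\<forall>i<length xs. p (xs ! i) \<longleftrightarrow> odd i) \<or> (\<forall>i<length xs. p (xs ! i) \<longleftrightarrow> even i)"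
    unfolding doubleton_eq_iff of_bool_eq_alt_iff[of p] of_bool_eq_alt_iff[of "\<lambda>x. \<not> p x"] by auto
  also have "\<dots> \<longleftrightarrow> (\<forall>i<length xs. p (xs ! i) \<longleftrightarrow> (p (xs ! 0) \<longleftrightarrow> even i))"
  proof (cases "xs = []")
    case False
    then have "0 < length xs" by simp
    then show ?thesis by (cases "p (xs ! 0)") force+
  qed simp
  finally show ?thesis unfolding alternating_iff_parity .
qed

section \<open>Successors with respect to a key\<close>

definition key_consecutive :: "('a \<Rightarrow> 'b::linorder) \<Rightarrow> 'a set \<Rightarrow> 'a \<Rightarrow> 'a \<Rightarrow> bool" where
  "key_consecutive f A x y \<longleftrightarrow> x \<in> A \<and> y \<in> A \<and> f x < f y \<and> (\<forall>z\<in>A. \<not> (f x < f z \<and> f z < f y))"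

lemma sorted_wrt_less_nth_less_iff:
  fixes f :: "'a \<Rightarrow> 'b::linorder"
  assumes "sorted_wrt (<) (map f xs)" "i < length xs" "j < length xs"
  shows "f (xs ! i) < f (xs ! j) \<longleftrightarrow> i < j"
  using sorted_wrt_nth_less[OF assms(1), of i j] sorted_wrt_nth_less[OF assms(1), of j i] assms(2,3)
  by (cases i j rule: linorder_cases) auto

lemma key_consecutive_iff_nth:
  fixes f :: "'a \<Rightarrow> 'b::linorder"
  assumes sorted: "sorted_wrt (<) (map f xs)"
  shows "key_consecutive f (set xs) x y \<longleftrightarrow> (\<exists>i. Suc i < length xs \<and> x = xs ! i \<and> y = xs ! Suc i)"
proof
  assume cons: "key_consecutive f (set xs) x y"
  then obtain i j where ij: "i < length xs" "j < length xs" "x = xs ! i" "y = xs ! j"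
    unfolding key_consecutive_def by (auto simp: in_set_conv_nth)
  have "i < j" using cons ij sorted_wrt_less_nth_less_iff[OF sorted ij(1,2)]
    by (simp add: key_consecutive_def)
  moreover have "\<not> Suc i < j"
  proof
    assume "Suc i < j"
    then have "f x < f (xs ! Suc i)" "f (xs ! Suc i) < f y"
      using ij sorted_wrt_less_nth_less_iff[OF sorted] by auto
    moreover have "xs ! Suc i \<in> set xs" using \<open>Suc i < j\<close> ij(2) by simp
    ultimately show False using cons by (auto simp: key_consecutive_def)
  qed
  ultimately show "\<exists>i. Suc i < length xs \<and> x = xs ! i \<and> y = xs ! Suc i"
    using ij by (metis Suc_lessI)
next
  assume "\<exists>i. Suc i < length xs \<and> x = xs ! i \<and> y = xs ! Suc i"
  then obtain i where i: "Suc i < length xs" "x = xs ! i" "y = xs ! Suc i" by blast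
  have mem: "x \<in> set xs" "y \<in> set xs" using i by simp_all
  have "\<not> (f x < f z \<and> f z < f y)" if "z \<in> set xs" for z
    using i that sorted_wrt_less_nth_less_iff[OF sorted] by (auto simp: in_set_conv_nth)
  then show "key_consecutive f (set xs) x y"
    using mem i sorted_wrt_less_nth_less_iff[OF sorted, of i "Suc i"]
    unfolding key_consecutive_def by simp
qed

context linorder
begin

lemma sorted_key_list_of_set_strict:
  assumes "inj_on f A" "finite A"
  shows "set (sorted_key_list_of_set f A) = A" "sorted_wrt (<) (map f (sorted_key_list_of_set f A))"
proof -
  interpret folding_insort_key "(\<le>)" "(<)" A f using assms(1) by unfold_locales
  show "set (sorted_key_list_of_set f A) = A"
    using set_sorted_key_list_of_set[OF subset_refl assms(2)] .
  show "sorted_wrt (<) (map f (sorted_key_list_of_set f A))"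
    using strict_sorted_key_list_of_set[OF subset_refl] .
qed

end

section \<open>Connected components\<close>

lemma adjacent_sym: "adjacent u v \<Longrightarrow> adjacent v u"
  unfolding adjacent_def by auto

abbreviation linked :: "(nat \<times> nat) set \<Rightarrow> nat \<times> nat \<Rightarrow> nat \<times> nat \<Rightarrow> bool" where
  "linked S \<equiv> \<lambda>u v. u \<in> S \<and> v \<in> S \<and> adjacent u v"

lemma component_subset: "component S x \<subseteq> S"
  unfolding component_def by auto

lemma mem_component_self: "x \<in> S \<Longrightarrow> x \<in> component S x"
  unfolding component_def by auto

lemma finite_component: "finite S \<Longrightarrow> finite (component S x)"
  using finite_subset[OF component_subset] .

lemma component_eq_if_linked:
  assumes "(linked S)\<^sup>*\<^sup>* x y"
  shows "component S x = component S y"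
proof -
  have "symp (linked S)" by (auto intro: sympI adjacent_sym)
  then have converse: "(linked S)\<^sup>*\<^sup>* y x" using assms by (rule sympD[OF symp_rtranclp])
  have "(linked S)\<^sup>*\<^sup>* x z \<longleftrightarrow> (linked S)\<^sup>*\<^sup>* y z" for z
    using assms converse by (meson rtranclp_trans)
  then show ?thesis unfolding component_def by simp
qed

lemma component_eq_if_mem: "y \<in> component S x \<Longrightarrow> component S y = component S x"
  using component_eq_if_linked[of S x y] unfolding component_def by simp

lemma component_invariant:
  assumes "y \<in> component S x" and step: "\<And>u v. u \<in> S \<Longrightarrow> v \<in> S \<Longrightarrow> adjacent u v \<Longrightarrow> g u = g v"
  shows "g y = g x"
proof -
  have "(linked S)\<^sup>*\<^sup>* x y" using assms(1) unfolding component_def by simp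
  then show ?thesis by (induction rule: rtranclp_induct) (auto dest: step)
qed

section \<open>Rows of F_X\<close>

definition first_col :: "(nat \<Rightarrow> nat) \<Rightarrow> nat \<Rightarrow> nat" where
  "first_col X a = X a + 1 - a"

lemma mem_F_iff: "(a, b) \<in> F k n X \<longleftrightarrow> 1 \<le> a \<and> a \<le> k \<and> 1 \<le> b \<and> b \<le> n - k \<and> first_col X a \<le> b"
  unfolding F_def Pkn_def first_col_def by auto

lemma strict_mono_on_add_le:
  fixes X :: "nat \<Rightarrow> nat"
  assumes "strict_mono_on {1..k} X" "1 \<le> a" "a \<le> a'" "a' \<le> k"
  shows "X a + (a' - a) \<le> X a'"
  using assms(3,4)
proof (induction a' rule: dec_induct)
  case (step m)
  have "X m < X (Suc m)"
    using assms(2) step by (intro strict_mono_onD[OF assms(1)]) auto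
  with step show ?case by simp
qed simp

lemma inV_bounds:
  assumes "inV k n X" "1 \<le> a" "a \<le> k"
  shows "a \<le> X a \<and> X a + k \<le> n + a"
proof -
  have mono: "strict_mono_on {1..k} X" and range: "X ` {1..k} \<subseteq> {1..n}"
    using assms(1) by (auto simp: inV_def)
  have "X 1 + (a - 1) \<le> X a" "X a + (k - a) \<le> X k"
    using strict_mono_on_add_le[OF mono] assms(2,3) by auto
  moreover have "1 \<le> X 1" "X k \<le> n" using range assms(2,3) by (force simp: image_subset_iff)+
  ultimately show ?thesis using assms(2,3) by linarith
qed

lemma first_col_bounds:
  assumes "inV k n X" "1 \<le> a" "a \<le> k"
  shows "1 \<le> first_col X a \<and> first_col X a + k \<le> n + 1 \<and> first_col X a + a = X a + 1"
  using inV_bounds[OF assms] unfolding first_col_def by auto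

lemma first_col_mono:
  assumes "strict_mono_on {1..k} X" "1 \<le> a" "a \<le> a'" "a' \<le> k"
  shows "first_col X a \<le> first_col X a'"
  using strict_mono_on_add_le[OF assms] assms(3) unfolding first_col_def by linarith

lemma F_up_closed:
  assumes "inV k n X" "(Suc a, b) \<in> F k n X" "1 \<le> a"
  shows "(a, b) \<in> F k n X"
  using assms first_col_mono[of k X a "Suc a"] unfolding mem_F_iff inV_def by auto

lemma less_across_equal_rows:
  fixes X Y :: "nat \<Rightarrow> nat"
  assumes "strict_mono_on {1..k} X" "strict_mono_on {1..k} Y" "1 \<le> a" "a < b" "b \<le> k"
    and "\<forall>l. a < l \<and> l < b \<longrightarrow> X l = Y l" and "Y a < X b"
  shows "Y a + (b - a) \<le> X b"
proof (cases "b = Suc a")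
  case False
  then have "Y a < Y (Suc a)" "Y (Suc a) = X (Suc a)"
    using assms(3-6) by (auto intro: strict_mono_onD[OF assms(2)])
  moreover have "X (Suc a) + (b - Suc a) \<le> X b"
    using strict_mono_on_add_le[OF assms(1)] assms(3-5) by simp
  ultimately show ?thesis using assms(4) by linarith
qed (use assms(7) in simp)

section \<open>The symmetric difference of F_I and F_J\<close>

abbreviation min_col :: "(nat \<times> nat) set \<Rightarrow> nat" where
  "min_col \<equiv> \<lambda>P. Min (snd ` P)"

locale inV_pair =
  fixes k n :: nat and I J :: "nat \<Rightarrow> nat"
  assumes inV_I: "inV k n I" and inV_J: "inV k n J"
begin

definition lo :: "nat \<Rightarrow> nat" where
  "lo a = min (first_col I a) (first_col J a)"

definition hi :: "nat \<Rightarrow> nat" where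
  "hi a = max (first_col I a) (first_col J a)"

definition S :: "(nat \<times> nat) set" where
  "S = F k n I - F k n J \<union> (F k n J - F k n I)"

lemma strict_mono_I: "strict_mono_on {1..k} I" and strict_mono_J: "strict_mono_on {1..k} J"
  using inV_I inV_J by (simp_all add: inV_def)

lemma lo_mono: "1 \<le> a \<Longrightarrow> a \<le> a' \<Longrightarrow> a' \<le> k \<Longrightarrow> lo a \<le> lo a'"
  using first_col_mono[OF strict_mono_I] first_col_mono[OF strict_mono_J] unfolding lo_def
  by (meson min.mono)

lemma hi_mono: "1 \<le> a \<Longrightarrow> a \<le> a' \<Longrightarrow> a' \<le> k \<Longrightarrow> hi a \<le> hi a'"
  using first_col_mono[OF strict_mono_I] first_col_mono[OF strict_mono_J] unfolding hi_def
  by (meson max.mono)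

lemma lo_less_hi_iff: "1 \<le> a \<Longrightarrow> a \<le> k \<Longrightarrow> lo a < hi a \<longleftrightarrow> I a \<noteq> J a"
  using first_col_bounds[OF inV_I, of a] first_col_bounds[OF inV_J, of a]
  unfolding lo_def hi_def by auto

lemma mem_S_iff: "(a, b) \<in> S \<longleftrightarrow> 1 \<le> a \<and> a \<le> k \<and> lo a \<le> b \<and> b < hi a"
proof (cases "1 \<le> a \<and> a \<le> k")
  case True
  then show ?thesis
    using first_col_bounds[OF inV_I, of a] first_col_bounds[OF inV_J, of a]
    unfolding lo_def hi_def by (auto simp: S_def mem_F_iff)
qed (auto simp: S_def mem_F_iff)

lemma mem_S_in_F_I_iff: "(a, b) \<in> S \<Longrightarrow> (a, b) \<in> F k n I \<longleftrightarrow> I a < J a"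
  using first_col_bounds[OF inV_I, of a] first_col_bounds[OF inV_J, of a]
  unfolding mem_S_iff lo_def hi_def by (auto simp: mem_F_iff)

lemma mem_S_rowI: "1 \<le> a \<Longrightarrow> a \<le> k \<Longrightarrow> I a \<noteq> J a \<Longrightarrow> (a, lo a) \<in> S"
  using lo_less_hi_iff mem_S_iff by simp

lemma mem_S_rowD: "u \<in> S \<Longrightarrow> 1 \<le> fst u \<and> fst u \<le> k \<and> I (fst u) \<noteq> J (fst u)"
  using mem_S_iff[of "fst u" "snd u"] lo_less_hi_iff[of "fst u"] by simp

lemma finite_S: "finite S"
  by (rule finite_subset[of _ "{1..k} \<times> {1..n - k}"]) (auto simp: S_def F_def Pkn_def)

text \<open>F_I and F_J are closed under moving up a row, and every cell of S lies in exactly one of them.\<close>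

lemma linked_same_F_I:
  assumes "u \<in> S" "v \<in> S" "adjacent u v"
  shows "u \<in> F k n I \<longleftrightarrow> v \<in> F k n I"
proof -
  have vertical: "(a, b) \<in> F k n I \<longleftrightarrow> (Suc a, b) \<in> F k n I"
    if "(a, b) \<in> S" "(Suc a, b) \<in> S" for a b
  proof -
    have "1 \<le> a" using that(1) mem_S_iff by simp
    then show ?thesis
      using that F_up_closed[OF inV_I, of a b] F_up_closed[OF inV_J, of a b] unfolding S_def by blast
  qed
  obtain a b a' b' where u: "u = (a, b)" and v: "v = (a', b')" by fastforce
  from assms(3) consider "a = a'" | "b = b'" "a = Suc a'" | "b = b'" "a' = Suc a"
    unfolding u v adjacent_def by auto
  then show ?thesis
  proof cases
    case 1
    then show ?thesis using assms(1,2) mem_S_in_F_I_iff unfolding u v by simp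
  next
    case 2
    then show ?thesis using assms(1,2) vertical[of a' b] unfolding u v by simp
  next
    case 3
    then show ?thesis using assms(1,2) vertical[of a b] unfolding u v by simp
  qed
qed

lemma component_same_F_I:
  assumes "w \<in> component S u"
  shows "w \<in> F k n I \<longleftrightarrow> u \<in> F k n I"
  using component_invariant[OF assms linked_same_F_I] .

lemma component_subset_F_I_iff:
  assumes "u \<in> S"
  shows "component S u \<subseteq> F k n I \<longleftrightarrow> I (fst u) < J (fst u)"
proof -
  have "component S u \<subseteq> F k n I \<longleftrightarrow> u \<in> F k n I"
    using component_same_F_I mem_component_self[OF assms] by blast
  also have "\<dots> \<longleftrightarrow> I (fst u) < J (fst u)"
    using mem_S_in_F_I_iff[of "fst u" "snd u"] assms by simp
  finally show ?thesis .
qed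

lemma component_subset_F_J_iff:
  assumes "u \<in> S"
  shows "component S u \<subseteq> F k n J \<longleftrightarrow> \<not> component S u \<subseteq> F k n I"
proof -
  have "w \<in> F k n J \<longleftrightarrow> w \<notin> F k n I" if "w \<in> component S u" for w
    using component_subset that unfolding S_def by blast
  then show ?thesis using component_same_F_I mem_component_self[OF assms] by blast
qed

lemma row_linked:
  assumes "1 \<le> a" "a \<le> k" "lo a \<le> b" "b \<le> b'" "b' < hi a"
  shows "(linked S)\<^sup>*\<^sup>* (a, b) (a, b')"
  using assms(4,5)
proof (induction b' rule: dec_induct)
  case (step m)
  have "linked S (a, m) (a, Suc m)"
    using assms(1-3) step by (simp add: mem_S_iff adjacent_def)
  moreover have "(linked S)\<^sup>*\<^sup>* (a, b) (a, m)" using step by simp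
  ultimately show ?case by (simp only: rtranclp.rtrancl_into_rtrancl)
qed simp

lemma mem_S_row_start: "u \<in> S \<Longrightarrow> (fst u, lo (fst u)) \<in> S"
  using mem_S_iff[of "fst u" "snd u"] mem_S_iff[of "fst u" "lo (fst u)"] by simp

lemma component_eq_row_start:
  assumes "u \<in> S"
  shows "component S u = component S (fst u, lo (fst u))"
proof -
  have "(linked S)\<^sup>*\<^sup>* (fst u, lo (fst u)) (fst u, snd u)"
    using assms mem_S_iff[of "fst u" "snd u"] by (intro row_linked) auto
  then have "component S (fst u, lo (fst u)) = component S (fst u, snd u)"
    by (rule component_eq_if_linked)
  then show ?thesis by simp
qed

text \<open>No cell of S in row l lies directly above a cell of S in row l+1.\<close>
definition cut_after :: "nat \<Rightarrow> bool" where
  "cut_after l \<longleftrightarrow> hi l \<le> lo (Suc l)"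

lemma linked_same_side_of_cut:
  assumes "cut_after l" "u \<in> S" "v \<in> S" "adjacent u v"
  shows "fst u \<le> l \<longleftrightarrow> fst v \<le> l"
proof -
  obtain a b a' b' where u: "u = (a, b)" and v: "v = (a', b')" by fastforce
  have "lo a \<le> b" "b < hi a" "lo a' \<le> b'" "b' < hi a'"
    using assms(2,3) unfolding u v mem_S_iff by simp_all
  then show ?thesis
    using assms(1,4) unfolding u v cut_after_def adjacent_def by (cases "a = l"; cases "a' = l") auto
qed

lemma component_same_side_of_cut:
  assumes "cut_after l" "w \<in> component S u"
  shows "fst w \<le> l \<longleftrightarrow> fst u \<le> l"
  by (rule component_invariant[OF assms(2) linked_same_side_of_cut[OF assms(1)]])

lemma rows_linked:
  assumes "1 \<le> a" "a \<le> b" "b \<le> k" "I a \<noteq> J a" "\<forall>l. a \<le> l \<and> l < b \<longrightarrow> \<not> cut_after l"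
  shows "(linked S)\<^sup>*\<^sup>* (a, lo a) (b, lo b) \<and> lo b < hi b"
  using assms(2,3)
proof (induction b rule: dec_induct)
  case base
  then show ?case using assms(1,4) lo_less_hi_iff by simp
next
  case (step m)
  have no_cut: "lo (Suc m) < hi m"
    using assms(5)[rule_format, of m] step(1,2) by (simp add: cut_after_def)
  have mono: "lo m \<le> lo (Suc m)" "hi m \<le> hi (Suc m)"
    using lo_mono hi_mono assms(1) step by auto
  have "(linked S)\<^sup>*\<^sup>* (m, lo m) (m, lo (Suc m))"
    using row_linked assms(1) step no_cut mono by simp
  moreover have "linked S (m, lo (Suc m)) (Suc m, lo (Suc m))"
    using assms(1) step no_cut mono unfolding mem_S_iff adjacent_def by auto
  ultimately have step_path: "(linked S)\<^sup>*\<^sup>* (m, lo m) (Suc m, lo (Suc m))"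
    by (simp only: rtranclp.rtrancl_into_rtrancl)
  have "(linked S)\<^sup>*\<^sup>* (a, lo a) (m, lo m)" using step by simp
  with step_path have "(linked S)\<^sup>*\<^sup>* (a, lo a) (Suc m, lo (Suc m))"
    by (simp only: rtranclp_trans)
  then show ?case using no_cut mono by simp
qed

lemma component_eq_iff_no_cut:
  assumes "u \<in> S" "v \<in> S" "fst u \<le> fst v"
  shows "component S u = component S v \<longleftrightarrow> (\<forall>l. fst u \<le> l \<and> l < fst v \<longrightarrow> \<not> cut_after l)"
proof
  assume eq: "component S u = component S v"
  show "\<forall>l. fst u \<le> l \<and> l < fst v \<longrightarrow> \<not> cut_after l"
  proof (intro allI impI notI)
    fix l assume l: "fst u \<le> l \<and> l < fst v" and cut: "cut_after l"
    have "v \<in> component S u" using eq mem_component_self[OF assms(2)] by simp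
    then have "(fst v \<le> l) = (fst u \<le> l)"
      by (rule component_same_side_of_cut[OF cut])
    with l show False by simp
  qed
next
  assume no_cut: "\<forall>l. fst u \<le> l \<and> l < fst v \<longrightarrow> \<not> cut_after l"
  have "1 \<le> fst u" "fst v \<le> k" "I (fst u) \<noteq> J (fst u)" using mem_S_rowD assms(1,2) by auto
  then have "(linked S)\<^sup>*\<^sup>* (fst u, lo (fst u)) (fst v, lo (fst v))"
    using rows_linked[of "fst u" "fst v"] assms(3) no_cut by simp
  then have "component S (fst u, lo (fst u)) = component S (fst v, lo (fst v))"
    by (rule component_eq_if_linked)
  then show "component S u = component S v"
    using component_eq_row_start[OF assms(1)] component_eq_row_start[OF assms(2)] by simp
qed


lemma columns_ordered:
  assumes "u \<in> S" "v \<in> S" "fst u < fst v" "component S u \<noteq> component S v"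
    and "w \<in> component S u" "w' \<in> component S v"
  shows "snd w < snd w'"
proof -
  obtain l where l: "fst u \<le> l" "l < fst v" and cut: "cut_after l"
    using component_eq_iff_no_cut[OF assms(1,2)] assms(3,4) by auto
  have "(fst w \<le> l) = (fst u \<le> l)" "(fst w' \<le> l) = (fst v \<le> l)"
    using component_same_side_of_cut[OF cut] assms(5,6) by blast+
  with l have rows: "fst w \<le> l" "l < fst w'" by auto
  have w: "w \<in> S" "w' \<in> S" using assms(5,6) component_subset by blast+
  then have bounds: "1 \<le> fst w" "fst w' \<le> k" "snd w < hi (fst w)" "lo (fst w') \<le> snd w'"
    using mem_S_iff[of "fst w" "snd w"] mem_S_iff[of "fst w'" "snd w'"] by simp_all
  have "snd w < hi (fst w)" by (fact bounds)
  also have "\<dots> \<le> hi l" using hi_mono bounds rows by simp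
  also have "\<dots> \<le> lo (Suc l)" using cut by (simp add: cut_after_def)
  also have "\<dots> \<le> lo (fst w')" using lo_mono bounds rows by simp
  also have "\<dots> \<le> snd w'" by (fact bounds)
  finally show ?thesis .
qed

lemma min_col_component:
  assumes "u \<in> S"
  obtains w where "w \<in> component S u" "min_col (component S u) = snd w"
proof -
  have "finite (snd ` component S u)" "snd ` component S u \<noteq> {}"
    using finite_component[OF finite_S] mem_component_self[OF assms] by auto
  then show ?thesis using Min_in that by fastforce
qed

lemma min_col_less_iff:
  assumes "u \<in> S" "v \<in> S"
  shows "min_col (component S u) < min_col (component S v)
    \<longleftrightarrow> fst u < fst v \<and> component S u \<noteq> component S v"
proof -
  have less: "min_col (component S x) < min_col (component S y)"
    if order: "x \<in> S" "y \<in> S" "fst x < fst y" "component S x \<noteq> component S y" for x y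
  proof -
    obtain w where "w \<in> component S x" "min_col (component S x) = snd w"
      using min_col_component[OF order(1)] by blast
    moreover obtain w' where "w' \<in> component S y" "min_col (component S y) = snd w'"
      using min_col_component[OF order(2)] by blast
    ultimately show ?thesis using columns_ordered[OF order] by simp
  qed
  show ?thesis
  proof (cases "component S u = component S v")
    case False
    then have "fst u \<noteq> fst v" using component_eq_iff_no_cut[OF assms] by auto
    then show ?thesis
      using less[OF assms _ False] less[OF assms(2,1) _ False[symmetric]] False
      by (meson less_asym linorder_neqE_nat)
  qed simp
qed

lemma inj_on_min_col: "inj_on min_col (components S)"
proof (rule inj_onI)
  fix P Q assume "P \<in> components S" "Q \<in> components S" and eq: "min_col P = min_col Q"
  then obtain u v where uv: "u \<in> S" "v \<in> S" "P = component S u" "Q = component S v"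
    unfolding components_def by auto
  show "P = Q"
  proof (rule ccontr)
    assume "P \<noteq> Q"
    moreover from this have "fst u \<noteq> fst v"
      using component_eq_iff_no_cut[OF uv(1,2)] uv(3,4) by auto
    ultimately show False
      using eq min_col_less_iff[OF uv(1,2)] min_col_less_iff[OF uv(2,1)] uv(3,4)
      by (cases "fst u < fst v") auto
  qed
qed

lemma set_comp_list: "set (comp_list k n I J) = components S"
  and sorted_comp_list: "sorted_wrt (<) (map min_col (comp_list k n I J))"
  using sorted_key_list_of_set_strict[OF inj_on_min_col] finite_S
  unfolding comp_list_def S_def[symmetric] components_def by simp_all

lemma alpha_I_eq: "alpha k n I I J = map (\<lambda>P. of_bool (P \<subseteq> F k n I)) (comp_list k n I J)"
  by (simp add: alpha_def of_bool_def)

lemma alpha_J_eq: "alpha k n J I J = map (\<lambda>P. of_bool (\<not> P \<subseteq> F k n I)) (comp_list k n I J)"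
proof -
  have "P \<subseteq> F k n J \<longleftrightarrow> \<not> P \<subseteq> F k n I" if "P \<in> set (comp_list k n I J)" for P
    using that component_subset_F_J_iff unfolding set_comp_list components_def by auto
  then show ?thesis by (simp add: alpha_def of_bool_def)
qed

lemma component_row_range:
  assumes "P \<in> components S"
  obtains first last where "(first, lo first) \<in> S" "P = component S (first, lo first)"
    and "(last, lo last) \<in> S" "P = component S (last, lo last)"
    and "\<forall>w\<in>P. first \<le> fst w \<and> fst w \<le> last"
proof -
  obtain u where u: "u \<in> S" "P = component S u" using assms unfolding components_def by auto
  have rows: "finite (fst ` P)" "fst ` P \<noteq> {}"
    using finite_component[OF finite_S] mem_component_self[OF u(1)] u(2) by auto
  have row_start: "(fst w, lo (fst w)) \<in> S \<and> P = component S (fst w, lo (fst w))" if "w \<in> P" for w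
  proof -
    have "w \<in> S" using that u(2) component_subset by blast
    then show ?thesis
      using mem_S_row_start component_eq_row_start component_eq_if_mem that u(2) by metis
  qed
  obtain w\<^sub>1 w\<^sub>2 where "w\<^sub>1 \<in> P" "fst w\<^sub>1 = Min (fst ` P)" "w\<^sub>2 \<in> P" "fst w\<^sub>2 = Max (fst ` P)"
    using Min_in[OF rows] Max_in[OF rows] by (metis imageE)
  then show ?thesis
    using that row_start rows by (metis Max_ge Min_le image_eqI)
qed

lemma empty_row: "1 \<le> l \<Longrightarrow> l \<le> k \<Longrightarrow> I l = J l \<Longrightarrow> lo l = hi l"
  using lo_less_hi_iff[of l] unfolding lo_def hi_def by simp

text \<open>Row a is the last row of a component of S and row b the first row of the next one.\<close>
definition component_boundary :: "nat \<Rightarrow> nat \<Rightarrow> bool" where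
  "component_boundary a b \<longleftrightarrow> 1 \<le> a \<and> a < b \<and> b \<le> k \<and> I a \<noteq> J a \<and> I b \<noteq> J b
     \<and> (\<forall>l. a < l \<and> l < b \<longrightarrow> I l = J l) \<and> hi a \<le> lo b"

lemma cut_between_iff:
  assumes "1 \<le> a" "a < b" "b \<le> k" "\<forall>l. a < l \<and> l < b \<longrightarrow> I l = J l"
  shows "(\<exists>l. a \<le> l \<and> l < b \<and> cut_after l) \<longleftrightarrow> hi a \<le> lo b"
proof
  assume "\<exists>l. a \<le> l \<and> l < b \<and> cut_after l"
  then obtain l where l: "a \<le> l" "l < b" "hi l \<le> lo (Suc l)" unfolding cut_after_def by blast
  have "hi a \<le> hi l" using hi_mono assms l by simp
  also have "\<dots> \<le> lo (Suc l)" by fact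
  also have "\<dots> \<le> lo b" using lo_mono assms l by simp
  finally show "hi a \<le> lo b" .
next
  assume ab: "hi a \<le> lo b"
  have "hi a \<le> lo (Suc a)"
  proof (cases "Suc a = b")
    case False
    then have "lo (Suc a) = hi (Suc a)" using empty_row assms by simp
    then show ?thesis using hi_mono assms by simp
  qed (use ab in simp)
  then show "\<exists>l. a \<le> l \<and> l < b \<and> cut_after l" using assms(2) unfolding cut_after_def by blast
qed

lemma consecutive_components_boundary:
  assumes cons: "key_consecutive min_col (components S) P Q"
  obtains a b where "component_boundary a b" "P = component S (a, lo a)" "Q = component S (b, lo b)"
proof -
  have "P \<in> components S" "Q \<in> components S" using cons by (simp_all add: key_consecutive_def)
  then obtain a b where a: "(a, lo a) \<in> S" "P = component S (a, lo a)" "\<forall>w\<in>P. fst w \<le> a"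
    and b: "(b, lo b) \<in> S" "Q = component S (b, lo b)" "\<forall>w\<in>Q. b \<le> fst w"
    by (metis component_row_range)
  have ab: "a < b" "P \<noteq> Q"
    using cons min_col_less_iff[OF a(1) b(1)] a(2) b(2) by (simp_all add: key_consecutive_def)
  have rows: "1 \<le> a" "b \<le> k" "I a \<noteq> J a" "I b \<noteq> J b" using mem_S_rowD a(1) b(1) by auto
  have middle: "I l = J l" if l: "a < l" "l < b" for l
  proof (rule ccontr)
    assume "I l \<noteq> J l"
    then have w: "(l, lo l) \<in> S" using mem_S_rowI rows l by simp
    have "component S (l, lo l) \<noteq> P" "component S (l, lo l) \<noteq> Q"
      using a(3) b(3) l mem_component_self[OF w] by fastforce+
    then have "min_col P < min_col (component S (l, lo l))"
      "min_col (component S (l, lo l)) < min_col Q"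
      using min_col_less_iff a(1,2) b(1,2) w l by auto
    moreover have "component S (l, lo l) \<in> components S" using w by (simp add: components_def)
    ultimately show False using cons by (auto simp: key_consecutive_def)
  qed
  have "\<exists>l. a \<le> l \<and> l < b \<and> cut_after l"
    using component_eq_iff_no_cut[OF a(1) b(1)] ab a(2) b(2) by auto
  then have "hi a \<le> lo b" using cut_between_iff rows ab middle by blast
  then show ?thesis using that rows ab middle a(2) b(2) unfolding component_boundary_def by blast
qed

lemma boundary_consecutive_components:
  assumes "component_boundary a b"
  shows "key_consecutive min_col (components S) (component S (a, lo a)) (component S (b, lo b))"
proof -
  have a: "(a, lo a) \<in> S" and b: "(b, lo b) \<in> S"
    using mem_S_rowI assms unfolding component_boundary_def by auto
  have "component S (a, lo a) \<noteq> component S (b, lo b)"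
    using component_eq_iff_no_cut[OF a b] cut_between_iff[of a b] assms
    unfolding component_boundary_def by auto
  then have less: "min_col (component S (a, lo a)) < min_col (component S (b, lo b))"
    using min_col_less_iff[OF a b] assms unfolding component_boundary_def by simp
  have "\<not> (min_col (component S (a, lo a)) < min_col (component S w)
          \<and> min_col (component S w) < min_col (component S (b, lo b)))" if w: "w \<in> S" for w
  proof
    assume "min_col (component S (a, lo a)) < min_col (component S w)
      \<and> min_col (component S w) < min_col (component S (b, lo b))"
    then have "a < fst w" "fst w < b"
      using min_col_less_iff[OF a w] min_col_less_iff[OF w b] by auto
    then show False using assms mem_S_rowD[OF w] unfolding component_boundary_def by auto
  qed
  then show ?thesis
    using less a b unfolding key_consecutive_def components_def by auto
qed

lemma arcs_cross_iff_boundary: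
  assumes "1 \<le> a" "a < b" "b \<le> k" "\<forall>l. a < l \<and> l < b \<longrightarrow> I l = J l"
  shows "arcs_cross (I a) (I b) (J a) (J b) \<longleftrightarrow> component_boundary a b \<and> (I a < J a \<longleftrightarrow> I b < J b)"
proof -
  let ?xa = "first_col I a" and ?ya = "first_col J a" and ?xb = "first_col I b" and ?yb = "first_col J b"
  have cols: "?xa + a = I a + 1" "?ya + a = J a + 1" "?xb + b = I b + 1" "?yb + b = J b + 1"
    using first_col_bounds[OF inV_I] first_col_bounds[OF inV_J] assms(1-3) by auto
  have across: "J a < I b \<longleftrightarrow> ?ya \<le> ?xb" "I a < J b \<longleftrightarrow> ?xa \<le> ?yb"
    using less_across_equal_rows[OF strict_mono_I strict_mono_J assms]
      less_across_equal_rows[OF strict_mono_J strict_mono_I assms(1-3)] assms(2,4) cols by auto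
  have mono: "?xa \<le> ?xb" "?ya \<le> ?yb"
    using first_col_mono[OF strict_mono_I] first_col_mono[OF strict_mono_J] assms(1-3) by simp_all
  have "arcs_cross (I a) (I b) (J a) (J b) \<longleftrightarrow>
      (?xa < ?ya \<and> ?ya \<le> ?xb \<and> ?xb < ?yb) \<or> (?ya < ?xa \<and> ?xa \<le> ?yb \<and> ?yb < ?xb)"
    unfolding arcs_cross_def across using cols by auto
  also have "\<dots> \<longleftrightarrow> component_boundary a b \<and> (I a < J a \<longleftrightarrow> I b < J b)"
    unfolding component_boundary_def hi_def lo_def using assms cols mono by auto
  finally show ?thesis .
qed

lemma arcs_nest_iff_rows:
  assumes "1 \<le> a" "a < b" "b \<le> k"
  shows "arcs_nest (I a) (I b) (J a) (J b) \<longleftrightarrow> I a \<noteq> J a \<and> I b \<noteq> J b \<and> (I a < J a \<longleftrightarrow> J b < I b)"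
proof -
  have "I a < I b" "J a < J b"
    using assms strict_mono_I strict_mono_J by (auto intro: strict_mono_onD)
  then show ?thesis unfolding arcs_nest_def by auto
qed

lemma nonnesting_iff_rows_agree:
  "nonnesting k I J \<longleftrightarrow>
    (\<forall>a b. 1 \<le> a \<and> a \<le> k \<and> 1 \<le> b \<and> b \<le> k \<and> I a \<noteq> J a \<and> I b \<noteq> J b
      \<longrightarrow> (I a < J a \<longleftrightarrow> I b < J b))"
proof
  assume nonnest: "nonnesting k I J"
  show "\<forall>a b. 1 \<le> a \<and> a \<le> k \<and> 1 \<le> b \<and> b \<le> k \<and> I a \<noteq> J a \<and> I b \<noteq> J b
      \<longrightarrow> (I a < J a \<longleftrightarrow> I b < J b)"
  proof (intro allI impI)
    fix a b assume rows: "1 \<le> a \<and> a \<le> k \<and> 1 \<le> b \<and> b \<le> k \<and> I a \<noteq> J a \<and> I b \<noteq> J b"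
    consider "a < b" | "a = b" | "b < a" by linarith
    then show "I a < J a \<longleftrightarrow> I b < J b"
    proof cases
      case 1
      then show ?thesis using nonnest arcs_nest_iff_rows[of a b] rows unfolding nonnesting_def by auto
    next
      case 3
      then show ?thesis using nonnest arcs_nest_iff_rows[of b a] rows unfolding nonnesting_def by auto
    qed simp
  qed
next
  assume agree: "\<forall>a b. 1 \<le> a \<and> a \<le> k \<and> 1 \<le> b \<and> b \<le> k \<and> I a \<noteq> J a \<and> I b \<noteq> J b
      \<longrightarrow> (I a < J a \<longleftrightarrow> I b < J b)"
  show "nonnesting k I J"
    unfolding nonnesting_def
  proof (intro allI impI)
    fix a b assume "1 \<le> a" "a < b" "b \<le> k"
    then show "\<not> arcs_nest (I a) (I b) (J a) (J b)"
      using agree[rule_format, of a b] arcs_nest_iff_rows[of a b] by auto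
  qed
qed

lemma nonnesting_iff_components_agree:
  "nonnesting k I J \<longleftrightarrow> (\<forall>P\<in>components S. \<forall>Q\<in>components S. P \<subseteq> F k n I \<longleftrightarrow> Q \<subseteq> F k n I)"
proof -
  have "(\<forall>P\<in>components S. \<forall>Q\<in>components S. P \<subseteq> F k n I \<longleftrightarrow> Q \<subseteq> F k n I)
    \<longleftrightarrow> (\<forall>u\<in>S. \<forall>v\<in>S. I (fst u) < J (fst u) \<longleftrightarrow> I (fst v) < J (fst v))"
    unfolding components_def ball_simps using component_subset_F_I_iff by (intro ball_cong) simp_all
  also have "\<dots> \<longleftrightarrow> (\<forall>a b. 1 \<le> a \<and> a \<le> k \<and> 1 \<le> b \<and> b \<le> k \<and> I a \<noteq> J a \<and> I b \<noteq> J b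
      \<longrightarrow> (I a < J a \<longleftrightarrow> I b < J b))"
  proof
    assume agree: "\<forall>u\<in>S. \<forall>v\<in>S. I (fst u) < J (fst u) \<longleftrightarrow> I (fst v) < J (fst v)"
    show "\<forall>a b. 1 \<le> a \<and> a \<le> k \<and> 1 \<le> b \<and> b \<le> k \<and> I a \<noteq> J a \<and> I b \<noteq> J b
      \<longrightarrow> (I a < J a \<longleftrightarrow> I b < J b)"
    proof (intro allI impI)
      fix a b assume "1 \<le> a \<and> a \<le> k \<and> 1 \<le> b \<and> b \<le> k \<and> I a \<noteq> J a \<and> I b \<noteq> J b"
      then have "(a, lo a) \<in> S" "(b, lo b) \<in> S" using mem_S_rowI by simp_all
      then show "I a < J a \<longleftrightarrow> I b < J b" using agree by fastforce
    qed
  next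
    assume agree: "\<forall>a b. 1 \<le> a \<and> a \<le> k \<and> 1 \<le> b \<and> b \<le> k \<and> I a \<noteq> J a \<and> I b \<noteq> J b
      \<longrightarrow> (I a < J a \<longleftrightarrow> I b < J b)"
    show "\<forall>u\<in>S. \<forall>v\<in>S. I (fst u) < J (fst u) \<longleftrightarrow> I (fst v) < J (fst v)"
      using agree mem_S_rowD by blast
  qed
  finally show ?thesis unfolding nonnesting_iff_rows_agree by simp
qed

lemma noncrossing_iff_boundaries_alternate:
  "noncrossing k I J \<longleftrightarrow> (\<forall>a b. component_boundary a b \<longrightarrow> \<not> (I a < J a \<longleftrightarrow> I b < J b))"
proof -
  have "(1 \<le> a \<longrightarrow> a < b \<longrightarrow> b \<le> k \<longrightarrow> (\<forall>l. a < l \<longrightarrow> l < b \<longrightarrow> I l = J l) \<longrightarrow>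
          \<not> arcs_cross (I a) (I b) (J a) (J b))
    \<longleftrightarrow> (component_boundary a b \<longrightarrow> \<not> (I a < J a \<longleftrightarrow> I b < J b))" for a b
  proof (cases "1 \<le> a \<and> a < b \<and> b \<le> k \<and> (\<forall>l. a < l \<and> l < b \<longrightarrow> I l = J l)")
    case True
    then show ?thesis using arcs_cross_iff_boundary[of a b] by auto
  qed (auto simp: component_boundary_def)
  then show ?thesis unfolding noncrossing_def by simp
qed

lemma noncrossing_iff_components_alternate:
  "noncrossing k I J \<longleftrightarrow>
    (\<forall>P Q. key_consecutive min_col (components S) P Q \<longrightarrow> \<not> (P \<subseteq> F k n I \<longleftrightarrow> Q \<subseteq> F k n I))"
proof -
  have sign: "component S (a, lo a) \<subseteq> F k n I \<longleftrightarrow> I a < J a"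
    if "1 \<le> a" "a \<le> k" "I a \<noteq> J a" for a
    using component_subset_F_I_iff[OF mem_S_rowI[OF that]] by simp
  have boundary_sign: "component S (a, lo a) \<subseteq> F k n I \<longleftrightarrow> I a < J a"
    "component S (b, lo b) \<subseteq> F k n I \<longleftrightarrow> I b < J b" if "component_boundary a b" for a b
    using that sign[of a] sign[of b] unfolding component_boundary_def by simp_all
  show ?thesis
    unfolding noncrossing_iff_boundaries_alternate
  proof (intro iffI allI impI)
    fix P Q assume alt: "\<forall>a b. component_boundary a b \<longrightarrow> \<not> (I a < J a \<longleftrightarrow> I b < J b)"
      and cons: "key_consecutive min_col (components S) P Q"
    obtain a b where "component_boundary a b" "P = component S (a, lo a)" "Q = component S (b, lo b)"
      by (rule consecutive_components_boundary[OF cons])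
    then show "\<not> (P \<subseteq> F k n I \<longleftrightarrow> Q \<subseteq> F k n I)" using alt boundary_sign by simp
  next
    fix a b assume alt: "\<forall>P Q. key_consecutive min_col (components S) P Q
        \<longrightarrow> \<not> (P \<subseteq> F k n I \<longleftrightarrow> Q \<subseteq> F k n I)"
      and ab: "component_boundary a b"
    show "\<not> (I a < J a \<longleftrightarrow> I b < J b)"
      using alt boundary_consecutive_components[OF ab] boundary_sign[OF ab] by blast
  qed
qed

end

theorem lemma4p11:
  fixes k n :: nat and I J :: "nat \<Rightarrow> nat"
  assumes "1 \<le> k" and "k \<le> n - 1"
    and "inV k n I" and "inV k n J"
  defines "d \<equiv> length (comp_list k n I J)"
  shows "(nonnesting k I J \<longleftrightarrow>
            {alpha k n I I J, alpha k n J I J} = {replicate d 0, replicate d 1})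
       \<and> (noncrossing k I J \<longleftrightarrow>
            {alpha k n I I J, alpha k n J I J} = {alt01 d, alt10 d})"
proof -
  interpret inV_pair k n I J using assms(3,4) by unfold_locales
  have "nonnesting k I J \<longleftrightarrow> {alpha k n I I J, alpha k n J I J} = {replicate d 0, replicate d 1}"
    unfolding alpha_I_eq alpha_J_eq d_def indicator_pair_eq_constants_iff set_comp_list
    by (rule nonnesting_iff_components_agree)
  moreover have "noncrossing k I J \<longleftrightarrow> {alpha k n I I J, alpha k n J I J} = {alt01 d, alt10 d}"
    unfolding alpha_I_eq alpha_J_eq d_def indicator_pair_eq_alternating_iff
      noncrossing_iff_components_alternate set_comp_list[symmetric]
      key_consecutive_iff_nth[OF sorted_comp_list]
    by blast
  ultimately show ?thesis by blast
qed

end
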